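(* Let $G=(V,E)$ be a graph with maximum (undirected) degree $\Delta$ and arboricity $\alpha$, let $\mu$ be an orientation of its edges with out-degree at most $2\alpha$, and let $h\le\log\alpha$. Procedure Oriented Edge-Coloring$(G,\mu,h)$ computes a proper $(\Delta+3\cdot2^h)$-edge-coloring of $G$.
   Context: Logarithms are base 2. The arboricity of $G$ is $\max_{S\subseteq V,|S|\ge2}\lceil |E(G[S])|/(|S|-1)\rceil$. A proper $k$-edge-coloring is a map $\varphi:E\to\{1,\dots,k\}$ with distinct colors on distinct edges sharing an endpoint. An oriented degree-splitting of $(H,\mu)$ with discrepancy $\kappa$ is a partition $(E_1,E_2)$ of $E(H)$ such that for every vertex $v$, the numbers of incoming edges of $v$ in $E_1$ and in $E_2$ differ by at most $\kappa$, and likewise for outgoing edges. Procedure Oriented Edge-Coloring$(H,\mu,h)$: if $h=0$, return a proper $(\Delta(H)+1)$-edge-coloring of (the undirected) $H$ with palette $\{1,\dots,\Delta(H)+1\}$, computed by a base-case subroutine; otherwise compute an oriented degree-splitting $(E_1,E_2)$ of $(H,\mu)$ with discrepancy at most 1, let $H_1=(V,E_1)$, $H_2=(V,E_2)$ with orientation induced by $\mu$, compute $\varphi_1=$ Oriented Edge-Coloring$(H_1,\mu,h-1)$, $\varphi_2=$ Oriented Edge-Coloring$(H_2,\mu,h-1)$, and return $\varphi=\varphi_1$ on $E_1$ and $\varphi=p_1+\varphi_2$ on $E_2$, where $p_1$ is the palette size of $\varphi_1$. *)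

theory Defs
  imports Complex_Main
begin

text \<open>Undirected simple graph on vertex set V with edge set E of 2-element subsets of V.
An orientation mu maps each edge e to an ordered pair (tail, head) with e = {tail, head}.\<close>

definition simple_graph :: "'a set \<Rightarrow> 'a set set \<Rightarrow> bool" where
  "simple_graph V E \<longleftrightarrow> finite V \<and>
     (\<forall>e\<in>E. \<exists>u v. e = {u, v} \<and> u \<noteq> v \<and> u \<in> V \<and> v \<in> V)"

definition is_orientation :: "'a set set \<Rightarrow> ('a set \<Rightarrow> 'a \<times> 'a) \<Rightarrow> bool" where
  "is_orientation E mu \<longleftrightarrow> (\<forall>e\<in>E. e = {fst (mu e), snd (mu e)})"

definition degree :: "'a set set \<Rightarrow> 'a \<Rightarrow> nat" where
  "degree E v = card {e\<in>E. v \<in> e}"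

definition max_degree :: "'a set \<Rightarrow> 'a set set \<Rightarrow> nat" where
  "max_degree V E = Max (insert 0 (degree E ` V))"

definition out_degree :: "('a set \<Rightarrow> 'a \<times> 'a) \<Rightarrow> 'a set set \<Rightarrow> 'a \<Rightarrow> nat" where
  "out_degree mu E v = card {e\<in>E. fst (mu e) = v}"

definition in_degree :: "('a set \<Rightarrow> 'a \<times> 'a) \<Rightarrow> 'a set set \<Rightarrow> 'a \<Rightarrow> nat" where
  "in_degree mu E v = card {e\<in>E. snd (mu e) = v}"

definition arboricity :: "'a set \<Rightarrow> 'a set set \<Rightarrow> nat" where
  "arboricity V E = Max (insert 0
     {nat \<lceil>real (card {e\<in>E. e \<subseteq> S}) / (real (card S) - 1)\<rceil> | S. S \<subseteq> V \<and> card S \<ge> 2})"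

definition proper_edge_coloring :: "'a set set \<Rightarrow> ('a set \<Rightarrow> nat) \<Rightarrow> nat \<Rightarrow> bool" where
  "proper_edge_coloring E phi k \<longleftrightarrow>
     (\<forall>e\<in>E. phi e \<in> {1..k}) \<and>
     (\<forall>e\<in>E. \<forall>e'\<in>E. e \<noteq> e' \<and> e \<inter> e' \<noteq> {} \<longrightarrow> phi e \<noteq> phi e')"

definition oriented_degree_splitting ::
  "'a set \<Rightarrow> 'a set set \<Rightarrow> ('a set \<Rightarrow> 'a \<times> 'a) \<Rightarrow> nat \<Rightarrow> 'a set set \<Rightarrow> 'a set set \<Rightarrow> bool" where
  "oriented_degree_splitting V E mu kappa E1 E2 \<longleftrightarrow>
     E1 \<union> E2 = E \<and> E1 \<inter> E2 = {} \<and>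
     (\<forall>v\<in>V. \<bar>int (in_degree mu E1 v) - int (in_degree mu E2 v)\<bar> \<le> int kappa \<and>
             \<bar>int (out_degree mu E1 v) - int (out_degree mu E2 v)\<bar> \<le> int kappa)"

text \<open>All possible runs of Oriented Edge-Coloring(H, mu, h): oec V mu E h phi p means that
the procedure, for some admissible choices of the splittings and base-case colorings,
returns the coloring phi whose palette size is p.\<close>
inductive oec :: "'a set \<Rightarrow> ('a set \<Rightarrow> 'a \<times> 'a) \<Rightarrow> 'a set set \<Rightarrow> nat \<Rightarrow> ('a set \<Rightarrow> nat) \<Rightarrow> nat \<Rightarrow> bool"
  for V mu where
  base: "proper_edge_coloring E phi (max_degree V E + 1) \<Longrightarrow>
         oec V mu E 0 phi (max_degree V E + 1)"
| step: "oriented_degree_splitting V E mu 1 E1 E2 \<Longrightarrow>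
         oec V mu E1 h phi1 p1 \<Longrightarrow> oec V mu E2 h phi2 p2 \<Longrightarrow>
         oec V mu E (Suc h) (\<lambda>e. if e \<in> E1 then phi1 e else p1 + phi2 e) (p1 + p2)"

end

theory Submission
  imports Defs
begin

text \<open>Each level of the recursion splits every in-degree and every out-degree into two halves
up to an additive 1, so the degree of a vertex in either half is at most half its degree plus 1.
Consequently, if every degree is at most \<open>K\<close>, the \<open>2^h\<close> base-case subgraphs have degrees at most
\<open>(K + 2 (2^h - 1)) / 2^h\<close>, and the palettes of their \<open>(\<Delta> + 1)\<close>-colorings add up to at most
\<open>K + 3 \<cdot> 2^h - 2\<close>. Gluing palettes side by side keeps the coloring proper.\<close>

lemma proper_edge_coloring_mono:
  "proper_edge_coloring E phi k \<Longrightarrow> k \<le> k' \<Longrightarrow> proper_edge_coloring E phi k'"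
  unfolding proper_edge_coloring_def by fastforce

lemma proper_edge_coloring_disjoint_Un:
  assumes "proper_edge_coloring E1 phi1 p1" "proper_edge_coloring E2 phi2 p2"
    and "E1 \<union> E2 = E"
  shows "proper_edge_coloring E (\<lambda>e. if e \<in> E1 then phi1 e else p1 + phi2 e) (p1 + p2)"
proof -
  let ?phi = "\<lambda>e. if e \<in> E1 then phi1 e else p1 + phi2 e"
  have low: "?phi e \<in> {1..p1}" if "e \<in> E1" for e
    using assms(1) that unfolding proper_edge_coloring_def by auto
  have high: "?phi e \<in> {p1 + 1..p1 + p2}" if "e \<in> E" "e \<notin> E1" for e
    using assms(2,3) that unfolding proper_edge_coloring_def by auto
  have "?phi e \<noteq> ?phi e'"
    if edges: "e \<in> E" "e' \<in> E" and adjacent: "e \<noteq> e'" "e \<inter> e' \<noteq> {}" for e e'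
  proof (cases "e \<in> E1 \<longleftrightarrow> e' \<in> E1")
    case True
    then consider "e \<in> E1" "e' \<in> E1" | "e \<in> E2" "e' \<in> E2" "e \<notin> E1" "e' \<notin> E1"
      using assms(3) edges by blast
    then show ?thesis
      using assms(1,2) adjacent unfolding proper_edge_coloring_def by cases simp_all
  next
    case False
    then show ?thesis
      using low[of e] low[of e'] high[of e] high[of e'] edges by (cases "e \<in> E1") auto
  qed
  moreover have "?phi e \<in> {1..p1 + p2}" if "e \<in> E" for e
    using low[of e] high[of e] that by (cases "e \<in> E1") auto
  ultimately show ?thesis unfolding proper_edge_coloring_def by blast
qed

lemma oec_proper_edge_coloring:
  "oec V mu E h phi p \<Longrightarrow> proper_edge_coloring E phi p"
proof (induction rule: oec.induct)
  case (base E phi)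
  then show ?case .
next
  case (step E E1 E2 h phi1 p1 phi2 p2)
  then show ?case
    unfolding oriented_degree_splitting_def by (blast intro: proper_edge_coloring_disjoint_Un)
qed

lemma simple_graph_subset: "simple_graph V E \<Longrightarrow> E' \<subseteq> E \<Longrightarrow> simple_graph V E'"
  unfolding simple_graph_def by blast

lemma is_orientation_subset: "is_orientation E mu \<Longrightarrow> E' \<subseteq> E \<Longrightarrow> is_orientation E' mu"
  unfolding is_orientation_def by blast

lemma simple_graph_finite_edges:
  assumes "simple_graph V E"
  shows "finite E"
proof -
  have "finite V" "E \<subseteq> Pow V" using assms unfolding simple_graph_def by auto
  then show ?thesis by (meson finite_Pow_iff finite_subset)
qed

lemma degree_eq_in_degree_plus_out_degree:
  assumes "simple_graph V E" "is_orientation E mu"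
  shows "degree E v = in_degree mu E v + out_degree mu E v"
proof -
  have "v \<in> e \<longleftrightarrow> snd (mu e) = v \<or> fst (mu e) = v" if "e \<in> E" for e
    using assms(2) that unfolding is_orientation_def by (metis insert_iff singleton_iff)
  then have incident: "{e\<in>E. v \<in> e} = {e\<in>E. snd (mu e) = v} \<union> {e\<in>E. fst (mu e) = v}"
    by blast
  have "fst (mu e) \<noteq> snd (mu e)" if "e \<in> E" for e
  proof -
    obtain a b where "e = {a, b}" "a \<noteq> b"
      using assms(1) \<open>e \<in> E\<close> unfolding simple_graph_def by blast
    moreover have "e = {fst (mu e), snd (mu e)}"
      using assms(2) \<open>e \<in> E\<close> unfolding is_orientation_def by blast
    ultimately show ?thesis by (metis doubleton_eq_iff insert_absorb2)
  qed
  then have "{e\<in>E. snd (mu e) = v} \<inter> {e\<in>E. fst (mu e) = v} = {}" by auto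
  then show ?thesis
    unfolding degree_def in_degree_def out_degree_def incident
    using simple_graph_finite_edges[OF assms(1)] by (simp add: card_Un_disjoint)
qed

lemma
  assumes "finite E" "E1 \<union> E2 = E" "E1 \<inter> E2 = {}"
  shows in_degree_disjoint_Un: "in_degree mu E v = in_degree mu E1 v + in_degree mu E2 v"
    and out_degree_disjoint_Un: "out_degree mu E v = out_degree mu E1 v + out_degree mu E2 v"
proof -
  have "finite E1" "finite E2" using assms by auto
  moreover have "{e\<in>E. P e} = {e\<in>E1. P e} \<union> {e\<in>E2. P e}" for P
    using assms(2) by auto
  ultimately show "in_degree mu E v = in_degree mu E1 v + in_degree mu E2 v"
    and "out_degree mu E v = out_degree mu E1 v + out_degree mu E2 v"
    unfolding in_degree_def out_degree_def using assms(3) by (simp_all add: card_Un_disjoint disjoint_iff)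
qed

lemma oriented_degree_splitting_sym:
  "oriented_degree_splitting V E mu k E1 E2 \<Longrightarrow> oriented_degree_splitting V E mu k E2 E1"
  unfolding oriented_degree_splitting_def by (auto simp: abs_minus_commute)

lemma degree_oriented_degree_splitting:
  assumes "simple_graph V E" "is_orientation E mu"
    and "oriented_degree_splitting V E mu 1 E1 E2" "v \<in> V"
  shows "2 * degree E1 v \<le> degree E v + 2"
proof -
  have split: "E1 \<union> E2 = E" "E1 \<inter> E2 = {}"
    and in_close: "\<bar>int (in_degree mu E1 v) - int (in_degree mu E2 v)\<bar> \<le> 1"
    and out_close: "\<bar>int (out_degree mu E1 v) - int (out_degree mu E2 v)\<bar> \<le> 1"
    using assms(3,4) unfolding oriented_degree_splitting_def by auto
  have "E1 \<subseteq> E" using split by blast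
  then have "degree E1 v = in_degree mu E1 v + out_degree mu E1 v"
    by (metis degree_eq_in_degree_plus_out_degree simple_graph_subset[OF assms(1)]
        is_orientation_subset[OF assms(2)])
  moreover have "degree E v = in_degree mu E1 v + in_degree mu E2 v
                              + out_degree mu E1 v + out_degree mu E2 v"
    using degree_eq_in_degree_plus_out_degree[OF assms(1,2)]
      in_degree_disjoint_Un[OF simple_graph_finite_edges[OF assms(1)] split]
      out_degree_disjoint_Un[OF simple_graph_finite_edges[OF assms(1)] split]
    by simp
  ultimately show ?thesis using in_close out_close by linarith
qed

lemma max_degree_le:
  assumes "finite V" "\<forall>v\<in>V. degree E v \<le> K"
  shows "max_degree V E \<le> K"
  using assms unfolding max_degree_def by (subst Max_le_iff) auto

lemma degree_le_max_degree:
  "finite V \<Longrightarrow> v \<in> V \<Longrightarrow> degree E v \<le> max_degree V E"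
  unfolding max_degree_def by auto

lemma oec_palette_bound:
  assumes "oec V mu E h phi p"
    and "simple_graph V E" "is_orientation E mu" "\<forall>v\<in>V. degree E v \<le> K"
  shows "p + 2 \<le> K + 3 * 2 ^ h"
  using assms
proof (induction arbitrary: K rule: oec.induct)
  case (base E phi)
  have "finite V" using base.prems(1) unfolding simple_graph_def by simp
  then have "max_degree V E \<le> K" using max_degree_le base.prems(3) by blast
  then show ?case by simp
next
  case (step E E1 E2 h phi1 p1 phi2 p2)
  have "E1 \<subseteq> E" "E2 \<subseteq> E" using step.hyps(1) unfolding oriented_degree_splitting_def by auto
  then have graphs: "simple_graph V E1" "is_orientation E1 mu" "simple_graph V E2" "is_orientation E2 mu"
    using simple_graph_subset[OF step.prems(1)] is_orientation_subset[OF step.prems(2)] by blast+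
  have "degree E1 v \<le> (K + 2) div 2" "degree E2 v \<le> (K + 2) div 2" if "v \<in> V" for v
    using degree_oriented_degree_splitting[OF step.prems(1,2) step.hyps(1) that]
      degree_oriented_degree_splitting[OF step.prems(1,2) oriented_degree_splitting_sym[OF step.hyps(1)] that]
      step.prems(3) that
    by auto
  then have "p1 + 2 \<le> (K + 2) div 2 + 3 * 2 ^ h" "p2 + 2 \<le> (K + 2) div 2 + 3 * 2 ^ h"
    using step.IH graphs by blast+
  then show ?case by simp
qed

theorem lemma4p11:
  fixes V :: "'a set" and E :: "'a set set" and mu :: "'a set \<Rightarrow> 'a \<times> 'a"
    and h :: nat and phi :: "'a set \<Rightarrow> nat" and p :: nat
  assumes "simple_graph V E"
    and "is_orientation E mu"
    and "\<forall>v\<in>V. out_degree mu E v \<le> 2 * arboricity V E"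
    and "real h \<le> log 2 (real (arboricity V E))"
    and "oec V mu E h phi p"
  shows "proper_edge_coloring E phi (max_degree V E + 3 * 2 ^ h)"
proof -
  have "finite V" using assms(1) unfolding simple_graph_def by simp
  then have "\<forall>v\<in>V. degree E v \<le> max_degree V E" by (simp add: degree_le_max_degree)
  then have "p \<le> max_degree V E + 3 * 2 ^ h"
    using oec_palette_bound[OF assms(5,1,2)] by fastforce
  then show ?thesis
    using proper_edge_coloring_mono oec_proper_edge_coloring[OF assms(5)] by blast
qed

end
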